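(* Let $\gamma>0$, let $E_1,E_2,\dots$ be i.i.d. unit exponential random variables, and for $0<\tau<1/2$ let $f_\tau(j)=j^\tau$ for $j\ge 0$ (so $f_\tau(0)=0$). Define $$W_k(f_\tau)=\sum_{j=1}^{k}\big(f_\tau(j)-f_\tau(j-1)\big)\left(\exp\Big(-\gamma\sum_{h=j}^{k}E_h/h\Big)-\mathbb{E}\exp\Big(-\gamma\sum_{h=j}^{k}E_h/h\Big)\right).$$ Then $W_k(f_\tau)$ converges almost surely, as $k\to\infty$, to a finite random variable $W_\infty(\tau)$. *)

theory Defs
  imports "HOL-Probability.Probability"
begin

(* f_tau(j) = j^tau, with f_tau(0) = 0 (note 0 powr tau = 0 in Isabelle) *)
definition f_tau :: "real \<Rightarrow> nat \<Rightarrow> real" where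
  "f_tau \<tau> j = real j powr \<tau>"

definition S_jk :: "(nat \<Rightarrow> 'a \<Rightarrow> real) \<Rightarrow> nat \<Rightarrow> nat \<Rightarrow> 'a \<Rightarrow> real" where
  "S_jk E j k \<omega> = (\<Sum>h=j..k. E h \<omega> / real h)"

definition W_k :: "'a measure \<Rightarrow> (nat \<Rightarrow> 'a \<Rightarrow> real) \<Rightarrow> real \<Rightarrow> real \<Rightarrow> nat \<Rightarrow> 'a \<Rightarrow> real" where
  "W_k M E \<gamma> \<tau> k \<omega> =
     (\<Sum>j=1..k. (f_tau \<tau> j - f_tau \<tau> (j - 1)) *
        (exp (- \<gamma> * S_jk E j k \<omega>)
         - integral\<^sup>L M (\<lambda>\<eta>. exp (- \<gamma> * S_jk E j k \<eta>))))"

end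

theory Submission
  imports Defs "HOL-Real_Asymp.Real_Asymp"
begin

text \<open>With \<open>X h = (E h - 1) / h\<close> one has \<open>exp (- \<gamma> * S_jk E j k) = m j k * exp (G j k)\<close>, where
  \<open>m j k = \<Prod>h=j..k. 1 / (1 + \<gamma> / h)\<close> is the mean and \<open>G j k = - \<gamma> * (\<Sum>h=j..k. X h) + O(\<gamma>\<^sup>2 / j)\<close>.
  Bounding every initial segment of a dyadic block by the squared sums over its dyadic subblocks,
  Markov's inequality and Borel--Cantelli give, almost surely, \<open>\<bar>\<Sum>h\<in>{n..<m}. X h\<bar> \<le> C * n powr (- \<sigma>)\<close>
  for all \<open>n \<le> m\<close> and any fixed \<open>\<sigma> < 1/2\<close>. Taking \<open>\<tau> < \<sigma>\<close>, the \<open>j\<close>-th term of \<open>W_k\<close> is dominated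
  by a multiple of the summable \<open>j powr (\<tau> - 1 - \<sigma>)\<close>, while it tends to \<open>0\<close> with \<open>k\<close> because
  \<open>m j k \<longlonglongrightarrow> 0\<close> (the harmonic series diverges). By Tannery's theorem \<open>W_k\<close> tends to \<open>0\<close>
  almost surely, so the limit is \<open>W\<^sub>\<infinity>(\<tau>) = 0\<close>.\<close>

lemma power2_add_le_weighted:
  fixes x y t :: real
  assumes "t > 0"
  shows "(x + y)^2 \<le> (1 + t) * x^2 + (1 + 1/t) * y^2"
proof -
  have "0 \<le> (t*x - y)^2 / t" using assms by simp
  also have "(t*x - y)^2 / t = t * x^2 - 2*x*y + y^2/t"
    using assms by (simp add: power2_eq_square field_simps)
  finally have "2*x*y \<le> t * x^2 + y^2/t" by simp
  then show ?thesis by (simp add: power2_eq_square field_simps)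
qed

text \<open>Every initial segment of \<open>{a..<a + 2^k}\<close> is a disjoint union of at most \<open>k + 1\<close> of the
  dyadic blocks whose squared sums are collected here.\<close>
fun dyadic_square_sum :: "(nat \<Rightarrow> real) \<Rightarrow> nat \<Rightarrow> nat \<Rightarrow> real" where
  "dyadic_square_sum x 0 a = (x a)^2"
| "dyadic_square_sum x (Suc k) a =
     dyadic_square_sum x k a + dyadic_square_sum x k (a + 2^k) + (\<Sum>h\<in>{a..<a + 2^k}. x h)^2"

lemma dyadic_square_sum_nonneg: "0 \<le> dyadic_square_sum x k a"
  by (induction k arbitrary: a) auto

lemma initial_sum_square_le_dyadic_square_sum:
  "m \<le> 2^k \<Longrightarrow> (\<Sum>h\<in>{a..<a + m}. x h)^2 \<le> real (k + 1) * dyadic_square_sum x k a"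
proof (induction k arbitrary: a m)
  case 0
  then have "m = 0 \<or> m = 1" by auto
  then show ?case by auto
next
  case (Suc k)
  note R_nonneg = dyadic_square_sum_nonneg[of x k a] dyadic_square_sum_nonneg[of x k "a + 2^k"]
  show ?case
  proof (cases "m \<le> 2^k")
    case True
    then have "(\<Sum>h\<in>{a..<a + m}. x h)^2 \<le> real (k + 1) * dyadic_square_sum x k a"
      by (rule Suc.IH)
    also have "\<dots> \<le> real (Suc k + 1) * dyadic_square_sum x (Suc k) a"
      using R_nonneg by (intro mult_mono) auto
    finally show ?thesis .
  next
    case False
    define m' where "m' = m - 2^k"
    have m: "a + m = (a + 2^k) + m'" and m': "m' \<le> 2^k"
      using False Suc.prems by (auto simp: m'_def)
    have "(\<Sum>h\<in>{a..<a + m}. x h) = (\<Sum>h\<in>{a..<a + 2^k}. x h) + (\<Sum>h\<in>{a + 2^k..<(a + 2^k) + m'}. x h)"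
      unfolding m by (rule sum.atLeastLessThan_concat[symmetric]) auto
    then have "(\<Sum>h\<in>{a..<a + m}. x h)^2 \<le> (1 + real (k + 1)) * (\<Sum>h\<in>{a..<a + 2^k}. x h)^2
        + (1 + 1 / real (k + 1)) * (\<Sum>h\<in>{a + 2^k..<(a + 2^k) + m'}. x h)^2"
      using power2_add_le_weighted[of "real (k + 1)"] by simp
    also have "\<dots> \<le> (1 + real (k + 1)) * (\<Sum>h\<in>{a..<a + 2^k}. x h)^2
        + (1 + 1 / real (k + 1)) * (real (k + 1) * dyadic_square_sum x k (a + 2^k))"
      using Suc.IH[OF m'] by (intro add_left_mono mult_left_mono) auto
    also have "\<dots> = real (Suc k + 1) * ((\<Sum>h\<in>{a..<a + 2^k}. x h)^2 + dyadic_square_sum x k (a + 2^k))"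
      by (simp add: field_simps)
    also have "\<dots> \<le> real (Suc k + 1) * dyadic_square_sum x (Suc k) a"
      using R_nonneg by (intro mult_left_mono) auto
    finally show ?thesis .
  qed
qed

lemma dyadic_tail_sum_le_geometric_sum:
  fixes x :: "nat \<Rightarrow> real"
  assumes "0 < q"
    and block: "\<And>k m. K \<le> k \<Longrightarrow> m \<le> 2^k \<Longrightarrow> \<bar>\<Sum>h\<in>{2^k..<2^k + m}. x h\<bar> \<le> q^k"
  shows "K \<le> k \<Longrightarrow> 2^k \<le> m \<Longrightarrow> m \<le> 2^(k + d) \<Longrightarrow> \<bar>\<Sum>h\<in>{2^k..<m}. x h\<bar> \<le> (\<Sum>i<d. q^(k + i))"
proof (induction d arbitrary: k m)
  case 0
  then show ?case by simp
next
  case (Suc d)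
  have rest_nonneg: "0 \<le> (\<Sum>i<d. q^(k + Suc i))"
    using \<open>0 < q\<close> by (auto intro: sum_nonneg)
  have shift: "(\<Sum>i<Suc d. q^(k + i)) = q^k + (\<Sum>i<d. q^(k + Suc i))"
    by (subst sum.lessThan_Suc_shift) simp
  show ?case
  proof (cases "m \<le> 2^(k + 1)")
    case True
    then have "\<bar>\<Sum>h\<in>{2^k..<2^k + (m - 2^k)}. x h\<bar> \<le> q^k"
      using Suc.prems by (intro block) auto
    then show ?thesis using Suc.prems shift rest_nonneg by simp
  next
    case False
    have split: "(\<Sum>h\<in>{2^k..<m}. x h) = (\<Sum>h\<in>{2^k..<2^k + 2^k}. x h) + (\<Sum>h\<in>{2^(k + 1)..<m}. x h)"
      using False by (subst sum.atLeastLessThan_concat[symmetric, of "2^k" "2^(k + 1)"]) (auto simp: mult_2)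
    have "\<bar>\<Sum>h\<in>{2^k..<2^k + 2^k}. x h\<bar> \<le> q^k"
      using Suc.prems by (intro block) auto
    moreover have "\<bar>\<Sum>h\<in>{2^(k + 1)..<m}. x h\<bar> \<le> (\<Sum>i<d. q^(k + 1 + i))"
      using Suc.IH[of "k + 1" m] Suc.prems False by simp
    ultimately show ?thesis
      unfolding split shift by (simp add: abs_triangle_ineq[THEN order_trans])
  qed
qed

lemma dyadic_tail_sum_le:
  fixes x :: "nat \<Rightarrow> real"
  assumes q: "0 < q" "q < 1"
    and block: "\<And>k m. K \<le> k \<Longrightarrow> m \<le> 2^k \<Longrightarrow> \<bar>\<Sum>h\<in>{2^k..<2^k + m}. x h\<bar> \<le> q^k"
    and "K \<le> k" "2^k \<le> m"
  shows "\<bar>\<Sum>h\<in>{2^k..<m}. x h\<bar> \<le> q^k / (1 - q)"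
proof -
  have "(2::nat)^m \<le> 2^(k + m)"
    by (rule power_increasing) auto
  then have "m \<le> 2^(k + m)"
    using less_exp[of m] by linarith
  then have "\<bar>\<Sum>h\<in>{2^k..<m}. x h\<bar> \<le> (\<Sum>i<m. q^(k + i))"
    using dyadic_tail_sum_le_geometric_sum[OF q(1) block] assms(4,5) by blast
  also have "\<dots> = q^k * ((1 - q^m) / (1 - q))"
    using q by (simp add: power_add sum_distrib_left[symmetric] sum_gp_strict)
  also have "\<dots> \<le> q^k * (1 / (1 - q))"
    using q by (intro mult_left_mono divide_right_mono) auto
  finally show ?thesis by simp
qed

lemma tail_sum_le_powr_of_dyadic_bounds:
  fixes x :: "nat \<Rightarrow> real"
  assumes "0 < \<sigma>"
    and block: "\<And>k m. K \<le> k \<Longrightarrow> m \<le> 2^k \<Longrightarrow> \<bar>\<Sum>h\<in>{2^k..<2^k + m}. x h\<bar> \<le> (2 powr (-\<sigma>))^k"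
    and n: "2^K \<le> n" and m: "n \<le> m"
  shows "\<bar>\<Sum>h\<in>{n..<m}. x h\<bar> \<le> 2 / ((1 - 2 powr (-\<sigma>)) * 2 powr (-\<sigma>)) * real n powr (-\<sigma>)"
proof -
  define q where "q = 2 powr (-\<sigma>)"
  have q: "0 < q" "q < 1" using \<open>0 < \<sigma>\<close> by (auto simp: q_def powr_less_one)
  have "1 \<le> n" using n by (metis le_trans one_le_numeral one_le_power)
  then obtain k where k: "2^k \<le> n" "n < 2^(k + 1)" using ex_power_ivl1[of 2 n] by auto
  have "K \<le> k"
  proof (rule ccontr)
    assume "\<not> K \<le> k"
    then have "(2::nat)^(k + 1) \<le> 2^K" by (intro power_increasing) auto
    then show False using k n by simp
  qed
  note tail = dyadic_tail_sum_le[OF q block[unfolded q_def[symmetric]] \<open>K \<le> k\<close>]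
  have "(\<Sum>h\<in>{n..<m}. x h) = (\<Sum>h\<in>{2^k..<m}. x h) - (\<Sum>h\<in>{2^k..<n}. x h)"
    using k m by (subst sum.atLeastLessThan_concat[symmetric, of "2^k" n m]) auto
  then have "\<bar>\<Sum>h\<in>{n..<m}. x h\<bar> \<le> 2 * (q^k / (1 - q))"
    using tail[of m] tail[of n] k m by linarith
  also have "\<dots> = 2 / ((1 - q) * q) * q^(k + 1)"
    using q by (simp add: field_simps)
  also have "\<dots> \<le> 2 / ((1 - q) * q) * real n powr (-\<sigma>)"
  proof (rule mult_left_mono)
    have "q^(k + 1) = 2 powr (real (k + 1) * - \<sigma>)"
      unfolding q_def by (rule powr_power) simp
    also have "\<dots> = (2 powr real (k + 1)) powr (-\<sigma>)"
      by (simp add: powr_powr)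
    also have "\<dots> = real (2^(k + 1)) powr (-\<sigma>)"
      by (subst powr_realpow) simp_all
    also have "\<dots> \<le> real n powr (-\<sigma>)"
      using k \<open>1 \<le> n\<close> \<open>0 < \<sigma>\<close> by (intro powr_mono2') (auto simp only: of_nat_le_iff)
    finally show "q^(k + 1) \<le> real n powr (-\<sigma>)" .
  qed (use q in simp)
  finally show ?thesis unfolding q_def .
qed

lemma of_nat_powr_neg_le_one: "0 \<le> \<sigma> \<Longrightarrow> real n powr (-\<sigma>) \<le> 1"
  using ge_one_powr_ge_zero[of "real n" \<sigma>] by (cases "n = 0") (simp_all add: powr_minus field_simps)

lemma ex_tail_sum_powr_bound:
  fixes x :: "nat \<Rightarrow> real"
  assumes "0 \<le> \<sigma>"
    and tail: "\<And>n m. N \<le> n \<Longrightarrow> n \<le> m \<Longrightarrow> \<bar>\<Sum>h\<in>{n..<m}. x h\<bar> \<le> C * real n powr (-\<sigma>)"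
  shows "\<exists>C'. \<forall>n m. 1 \<le> n \<longrightarrow> n \<le> m \<longrightarrow> \<bar>\<Sum>h\<in>{n..<m}. x h\<bar> \<le> C' * real n powr (-\<sigma>)"
proof -
  define N' where "N' = max N 1"
  define B where "B = (\<Sum>h\<in>{1..<N'}. \<bar>x h\<bar>) + \<bar>C\<bar>"
  have "0 \<le> B" by (auto simp: B_def intro: sum_nonneg)
  have head: "\<bar>\<Sum>h\<in>A. x h\<bar> \<le> (\<Sum>h\<in>{1..<N'}. \<bar>x h\<bar>)" if "A \<subseteq> {1..<N'}" for A
    by (rule order_trans[OF sum_abs sum_mono2]) (use that in auto)
  have early: "\<bar>\<Sum>h\<in>{n..<m}. x h\<bar> \<le> B" if "1 \<le> n" "n < N'" "n \<le> m" for n m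
  proof (cases "m \<le> N'")
    case True
    then show ?thesis using head[of "{n..<m}"] that by (auto simp: B_def)
  next
    case False
    have "(\<Sum>h\<in>{n..<m}. x h) = (\<Sum>h\<in>{n..<N'}. x h) + (\<Sum>h\<in>{N'..<m}. x h)"
      using False that by (intro sum.atLeastLessThan_concat[symmetric]) auto
    moreover have "\<bar>\<Sum>h\<in>{n..<N'}. x h\<bar> \<le> (\<Sum>h\<in>{1..<N'}. \<bar>x h\<bar>)"
      using that by (intro head) auto
    moreover have "\<bar>\<Sum>h\<in>{N'..<m}. x h\<bar> \<le> C * real N' powr (-\<sigma>)"
      using False by (intro tail) (auto simp: N'_def)
    moreover have "C * real N' powr (-\<sigma>) \<le> \<bar>C\<bar> * 1"
      using of_nat_powr_neg_le_one[OF \<open>0 \<le> \<sigma>\<close>, of N'] by (intro mult_mono) auto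
    ultimately show ?thesis unfolding B_def by linarith
  qed
  define C' where "C' = max C (B * real N' powr \<sigma>)"
  have "\<bar>\<Sum>h\<in>{n..<m}. x h\<bar> \<le> C' * real n powr (-\<sigma>)" if "1 \<le> n" "n \<le> m" for n m
  proof (cases "N' \<le> n")
    case True
    then have "\<bar>\<Sum>h\<in>{n..<m}. x h\<bar> \<le> C * real n powr (-\<sigma>)"
      using that by (intro tail) (auto simp: N'_def)
    also have "\<dots> \<le> C' * real n powr (-\<sigma>)"
      by (intro mult_right_mono) (auto simp: C'_def)
    finally show ?thesis .
  next
    case False
    have "1 \<le> real N' powr \<sigma> * real n powr (-\<sigma>)"
      using False that \<open>0 \<le> \<sigma>\<close>
      by (simp add: powr_minus divide_simps powr_mono2)
    then have "B \<le> B * (real N' powr \<sigma> * real n powr (-\<sigma>))"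
      using \<open>0 \<le> B\<close> by (simp add: mult_le_cancel_left1)
    also have "\<dots> \<le> C' * real n powr (-\<sigma>)"
      unfolding mult.assoc[symmetric] by (intro mult_right_mono) (auto simp: C'_def)
    finally show ?thesis using early[of n m] that False by simp
  qed
  then show ?thesis by blast
qed

lemma abs_ln_one_plus_x_minus_x_le_square:
  fixes x :: real
  assumes "0 \<le> x"
  shows "\<bar>ln (1 + x) - x\<bar> \<le> x^2"
proof -
  have "x - x^2 \<le> x / (1 + x)"
    using assms by (simp add: field_simps power2_eq_square)
  also have "\<dots> \<le> ln (1 + x)"
    using ln_add1_ge[OF assms] by (simp add: add.commute)
  finally show ?thesis
    using ln_add_one_self_le_self[OF assms] by linarith
qed

lemma abs_exp_minus_one_le:
  fixes y :: real
  shows "\<bar>exp y - 1\<bar> \<le> \<bar>y\<bar> * exp \<bar>y\<bar>"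
proof -
  have "\<bar>exp y - 1\<bar> \<le> exp \<bar>y\<bar> - 1"
  proof (cases "0 \<le> y")
    case False
    then have "\<bar>exp y - 1\<bar> = 1 - exp y" "\<bar>y\<bar> = - y" by auto
    then show ?thesis
      using exp_ge_add_one_self[of y] exp_ge_add_one_self[of "-y"] by linarith
  qed simp
  also have "exp \<bar>y\<bar> - 1 \<le> \<bar>y\<bar> * exp \<bar>y\<bar>"
    using exp_ge_add_one_self[of "- \<bar>y\<bar>"] mult_right_mono[of "1 - \<bar>y\<bar>" "exp (- \<bar>y\<bar>)" "exp \<bar>y\<bar>"]
    by (simp add: exp_minus algebra_simps)
  finally show ?thesis .
qed

lemma sum_inverse_square_le:
  assumes "1 \<le> a"
  shows "(\<Sum>h\<in>{a..<a + n}. 1 / (real h)^2) \<le> 2 / real a"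
proof -
  have "(\<Sum>h\<in>{a..<a + n}. 1 / (real h)^2) \<le> 2 / real a - 2 / real (a + n)"
  proof (induction n)
    case (Suc n)
    define y where "y = real (a + n)"
    have "1 \<le> y" using assms by (simp add: y_def)
    then have "y * (y + 1) \<le> 2 * y^2"
      by (simp add: power2_eq_square algebra_simps)
    then have "2 / (2 * y^2) \<le> 2 / (y * (y + 1))"
      using \<open>1 \<le> y\<close> by (intro divide_left_mono) auto
    also have "\<dots> = 2 / y - 2 / real (a + Suc n)"
      using \<open>1 \<le> y\<close> by (simp add: y_def field_simps)
    finally have "1 / y^2 \<le> 2 / y - 2 / real (a + Suc n)"
      by simp
    then show ?case
      using Suc unfolding y_def by simp
  qed simp
  moreover have "0 \<le> 2 / real (a + n)" by simp
  ultimately show ?thesis by linarith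
qed

lemma f_tau_increment_nonneg: "0 < \<tau> \<Longrightarrow> 0 \<le> f_tau \<tau> j - f_tau \<tau> (j - 1)"
  unfolding f_tau_def by (cases j) (auto intro!: powr_mono2)

lemma f_tau_increment_le:
  assumes "0 < \<tau>" "\<tau> \<le> 1" "1 \<le> j"
  shows "f_tau \<tau> j - f_tau \<tau> (j - 1) \<le> real j powr (\<tau> - 1)"
proof -
  define t where "t = real (j - 1) / real j"
  have "0 \<le> t" "t \<le> 1" "0 < real j" using assms by (auto simp: t_def)
  then have "t \<le> t powr \<tau>"
    using powr_mono'[of \<tau> 1 t] assms by simp
  have "f_tau \<tau> (j - 1) = t powr \<tau> * real j powr \<tau>"
    unfolding f_tau_def using \<open>0 \<le> t\<close> \<open>0 < real j\<close> by (simp add: t_def powr_mult[symmetric])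
  also have "\<dots> \<ge> t * real j powr \<tau>"
    using \<open>t \<le> t powr \<tau>\<close> by (intro mult_right_mono) auto
  finally have "f_tau \<tau> j - f_tau \<tau> (j - 1) \<le> (1 - t) * real j powr \<tau>"
    unfolding f_tau_def by (simp add: algebra_simps)
  also have "\<dots> = real j powr (\<tau> - 1)"
    using assms by (simp add: t_def field_simps of_nat_diff powr_diff)
  finally show ?thesis .
qed

lemma summable_f_tau_increment_mult_powr:
  assumes "0 < \<tau>" "\<tau> < \<sigma>" "\<tau> \<le> 1" "0 \<le> c"
  shows "summable (\<lambda>j. (f_tau \<tau> j - f_tau \<tau> (j - 1)) * (c * real j powr (-\<sigma>)))"
proof (rule summable_comparison_test')
  show "summable (\<lambda>j. c * real j powr (\<tau> - 1 - \<sigma>))"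
    using assms by (intro summable_mult) (simp add: summable_real_powr_iff)
  fix j :: nat assume "1 \<le> j"
  have "(f_tau \<tau> j - f_tau \<tau> (j - 1)) * (c * real j powr (-\<sigma>))
      \<le> real j powr (\<tau> - 1) * (c * real j powr (-\<sigma>))"
    using f_tau_increment_le[of \<tau> j] \<open>1 \<le> j\<close> assms by (intro mult_right_mono) auto
  also have "\<dots> = c * real j powr (\<tau> - 1 - \<sigma>)"
    using \<open>1 \<le> j\<close> by (simp add: powr_add[symmetric])
  finally show "norm ((f_tau \<tau> j - f_tau \<tau> (j - 1)) * (c * real j powr (-\<sigma>))) \<le> c * real j powr (\<tau> - 1 - \<sigma>)"
    using f_tau_increment_nonneg[OF assms(1), of j] \<open>0 \<le> c\<close> by simp
qed

lemma sum_ln_one_plus_inverse_at_top: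
  fixes g :: real
  assumes "0 < g" "1 \<le> j"
  shows "filterlim (\<lambda>k. \<Sum>h=j..k. ln (1 + g / real h)) at_top sequentially"
proof (rule filterlim_at_top_mono)
  define c where "c = g / (1 + g)"
  have "0 < c" using assms by (simp add: c_def)
  have "filterlim (\<lambda>k. harm k - harm (j - 1) :: real) at_top sequentially"
    using filterlim_tendsto_add_at_top[OF tendsto_const harm_at_top, of "- harm (j - 1)"] by simp
  then show "filterlim (\<lambda>k. c * (harm k - harm (j - 1) :: real)) at_top sequentially"
    by (rule filterlim_tendsto_pos_mult_at_top[OF tendsto_const \<open>0 < c\<close>])
  show "\<forall>\<^sub>F k in sequentially. c * (harm k - harm (j - 1)) \<le> (\<Sum>h=j..k. ln (1 + g / real h))"
  proof (rule eventually_sequentiallyI[of j])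
    fix k assume "j \<le> k"
    have "harm k - harm (j - 1) =
        (\<Sum>h\<in>{1..<Suc k}. inverse (real h)) - (\<Sum>h\<in>{1..<Suc (j - 1)}. inverse (real h))"
      by (simp only: harm_def atLeastLessThanSuc_atLeastAtMost)
    also have "\<dots> = (\<Sum>h=j..k. 1 / real h)"
      using \<open>1 \<le> j\<close> \<open>j \<le> k\<close>
      by (subst sum_diff_nat_ivl) (auto simp: atLeastLessThanSuc_atLeastAtMost inverse_eq_divide)
    finally have "harm k - harm (j - 1) = (\<Sum>h=j..k. 1 / real h)" .
    then have "c * (harm k - harm (j - 1)) = (\<Sum>h=j..k. c / real h)"
      by (simp add: sum_distrib_left)
    also have "\<dots> \<le> (\<Sum>h=j..k. ln (1 + g / real h))"
    proof (rule sum_mono)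
      fix h assume "h \<in> {j..k}"
      then have h: "1 \<le> real h" using \<open>1 \<le> j\<close> by auto
      have "g * 1 \<le> g * real h"
        using h assms by (intro mult_left_mono) auto
      then have "real h + g \<le> (1 + g) * real h"
        by (simp add: algebra_simps)
      then have "g / ((1 + g) * real h) \<le> g / (real h + g)"
        by (rule divide_left_mono) (use h assms in auto)
      then have "c / real h \<le> g / (real h + g)"
        by (simp add: c_def)
      also have "\<dots> = (g / real h) / (1 + g / real h)"
        using h by (simp add: field_simps)
      also have "\<dots> \<le> ln (1 + g / real h)"
        using ln_add1_ge[of "g / real h"] assms h by (simp add: add.commute)
      finally show "c / real h \<le> ln (1 + g / real h)" .
    qed
    finally show "c * (harm k - harm (j - 1)) \<le> (\<Sum>h=j..k. ln (1 + g / real h))" .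
  qed
qed

lemma weighted_exp_sum_tendsto_zero:
  fixes a b :: "nat \<Rightarrow> real" and m g :: "nat \<Rightarrow> nat \<Rightarrow> real"
  assumes a: "\<And>j. 0 \<le> a j"
    and m: "\<And>j k. 0 \<le> m j k" "\<And>j k. m j k \<le> 1" "\<And>j. 1 \<le> j \<Longrightarrow> (\<lambda>k. m j k) \<longlonglongrightarrow> 0"
    and g: "\<And>j k. 1 \<le> j \<Longrightarrow> j \<le> k \<Longrightarrow> \<bar>g j k\<bar> \<le> b j"
    and b: "\<And>j. 0 \<le> b j" "\<And>j. b j \<le> B"
    and summable: "summable (\<lambda>j. a j * b j)"
  shows "(\<lambda>k. \<Sum>j=1..k. a j * m j k * (exp (g j k) - 1)) \<longlonglongrightarrow> 0"
proof -
  define T where "T j k = (if 1 \<le> j \<and> j \<le> k then a j * m j k * (exp (g j k) - 1) else 0)" for j k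
  have T_le: "\<bar>T j k\<bar> \<le> exp B * (a j * b j) * m j k" for j k
  proof (cases "1 \<le> j \<and> j \<le> k")
    case True
    have "\<bar>exp (g j k) - 1\<bar> \<le> b j * exp B"
      using abs_exp_minus_one_le[of "g j k"] g[of j k] True b[of j]
      by (meson exp_ge_zero abs_ge_zero exp_le_cancel_iff mult_mono order_trans)
    then have "m j k * \<bar>exp (g j k) - 1\<bar> \<le> m j k * (b j * exp B)"
      using m(1) by (rule mult_left_mono)
    from mult_left_mono[OF this a[of j]]
    show ?thesis
      using True a[of j] m(1)[of j k] by (simp add: T_def abs_mult mult_ac)
  qed (use a b m in \<open>auto simp: T_def\<close>)
  have "(\<lambda>k. suminf (\<lambda>j. T j k)) \<longlonglongrightarrow> suminf (\<lambda>j. 0 :: real)"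
  proof (rule tannerys_theorem[THEN conjunct2, THEN conjunct2])
    show "(\<lambda>k. T j k) \<longlonglongrightarrow> 0" for j
    proof (cases "1 \<le> j")
      case True
      show ?thesis
        by (rule Lim_null_comparison[OF always_eventually tendsto_mult_right_zero[OF m(3)[OF True]]])
          (use T_le in auto)
    qed (simp add: T_def)
    show "summable (\<lambda>j. exp B * (a j * b j))"
      using summable by (rule summable_mult)
    have "\<bar>T j k\<bar> \<le> exp B * (a j * b j)" for j k
      by (rule order_trans[OF T_le mult_right_le_one_le]) (use a b m in auto)
    then show "\<forall>\<^sub>F (j, k) in at_top \<times>\<^sub>F sequentially. norm (T j k) \<le> exp B * (a j * b j)"
      by (intro always_eventually) auto
  qed simp
  moreover have "suminf (\<lambda>j. T j k) = (\<Sum>j=1..k. a j * m j k * (exp (g j k) - 1))" for k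
    by (subst suminf_finite[of "{1..k}"]) (auto simp: T_def)
  ultimately show ?thesis by simp
qed

lemma has_bochner_integral_exponential_density:
  "0 < l \<Longrightarrow> has_bochner_integral lborel (exponential_density l) 1"
  using nn_integral_erlang_ith_moment[of l 0 0]
  by (intro has_bochner_integral_nn_integral) (auto simp: exponential_density_nonneg)

locale iid_unit_exponential = prob_space M for M :: "'a measure" +
  fixes E :: "nat \<Rightarrow> 'a \<Rightarrow> real"
  assumes distributed_E: "\<And>h. 1 \<le> h \<Longrightarrow> distributed M lborel (E h) (\<lambda>x. ennreal (exponential_density 1 x))"
    and indep_E: "indep_vars (\<lambda>_. borel) E {1..}"
begin

lemma E_measurable [measurable]: "1 \<le> h \<Longrightarrow> E h \<in> borel_measurable M"
  using distributed_measurable[OF distributed_E] by auto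

lemma E_moment:
  assumes "1 \<le> h"
  shows "integrable M (\<lambda>x. E h x ^ i)" "expectation (\<lambda>x. E h x ^ i) = fact i"
  using erlang_ith_moment_integrable[of 1 "E h" 0 i] erlang_ith_moment[of 1 "E h" 0 i] distributed_E[OF assms]
  by simp_all

lemma expectation_exp_neg_mult_E:
  assumes "1 \<le> h" "0 \<le> c"
  shows "integrable M (\<lambda>\<omega>. exp (- c * E h \<omega>))" "expectation (\<lambda>\<omega>. exp (- c * E h \<omega>)) = 1 / (1 + c)"
proof -
  have "exponential_density 1 x * exp (- c * x) = 1 / (1 + c) * exponential_density (1 + c) x" for x
    using \<open>0 \<le> c\<close> by (auto simp: exponential_density_def exp_add[symmetric] field_simps)
  then have "has_bochner_integral lborel (\<lambda>x. exponential_density 1 x * exp (- c * x)) (1 / (1 + c))"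
    using has_bochner_integral_mult_right[OF has_bochner_integral_exponential_density[of "1 + c"], of "1 / (1 + c)"]
      \<open>0 \<le> c\<close> by simp
  then show "integrable M (\<lambda>\<omega>. exp (- c * E h \<omega>))" "expectation (\<lambda>\<omega>. exp (- c * E h \<omega>)) = 1 / (1 + c)"
    using distributed_integrable[OF distributed_E[OF \<open>1 \<le> h\<close>]] distributed_integral[OF distributed_E[OF \<open>1 \<le> h\<close>]]
    by (auto simp: has_bochner_integral_iff exponential_density_nonneg)
qed

lemma expectation_exp_S_jk:
  assumes "0 \<le> \<gamma>" "1 \<le> j"
  shows "integral\<^sup>L M (\<lambda>\<eta>. exp (- \<gamma> * S_jk E j k \<eta>)) = exp (- (\<Sum>h=j..k. ln (1 + \<gamma> / real h)))"
proof -
  let ?Y = "\<lambda>h \<omega>. exp (- (\<gamma> / real h) * E h \<omega>)"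
  have prod: "exp (- \<gamma> * S_jk E j k \<eta>) = (\<Prod>h\<in>{j..k}. ?Y h \<eta>)" for \<eta>
    by (auto simp: S_jk_def sum_distrib_left exp_sum[symmetric] intro!: arg_cong[where f=exp] sum.cong)
  have "indep_vars (\<lambda>_. borel) (\<lambda>h \<omega>. (\<lambda>x. exp (- (\<gamma> / real h) * x)) (E h \<omega>)) {1..}"
    by (rule indep_vars_compose2[OF indep_E]) auto
  then have indep: "indep_vars (\<lambda>_. borel) ?Y {j..k}"
    by (rule indep_vars_subset) (use \<open>1 \<le> j\<close> in auto)
  have "integrable M (?Y h)" if "h \<in> {j..k}" for h
    using expectation_exp_neg_mult_E(1)[of h "\<gamma> / real h"] assms that by auto
  then have "integral\<^sup>L M (\<lambda>\<eta>. exp (- \<gamma> * S_jk E j k \<eta>)) = (\<Prod>h\<in>{j..k}. expectation (?Y h))"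
    unfolding prod by (intro indep_vars_lebesgue_integral[OF _ indep]) auto
  also have "\<dots> = (\<Prod>h\<in>{j..k}. exp (- ln (1 + \<gamma> / real h)))"
  proof (rule prod.cong[OF refl])
    fix h assume "h \<in> {j..k}"
    then have "expectation (?Y h) = 1 / (1 + \<gamma> / real h)" and "0 < 1 + \<gamma> / real h"
      using assms expectation_exp_neg_mult_E[of h "\<gamma> / real h"] by (auto simp: add_pos_nonneg)
    then show "expectation (?Y h) = exp (- ln (1 + \<gamma> / real h))"
      by (simp add: exp_minus inverse_eq_divide)
  qed
  also have "\<dots> = exp (- (\<Sum>h=j..k. ln (1 + \<gamma> / real h)))"
    by (simp add: exp_sum[symmetric] sum_negf)
  finally show ?thesis .
qed

definition X :: "nat \<Rightarrow> 'a \<Rightarrow> real" where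
  "X h \<omega> = (E h \<omega> - 1) / real h"

lemma X_measurable [measurable]: "1 \<le> h \<Longrightarrow> X h \<in> borel_measurable M"
  unfolding X_def by measurable

lemma X_integrable: "1 \<le> h \<Longrightarrow> integrable M (X h)"
  using E_moment(1)[of h 1] unfolding X_def by (auto intro!: integrable_divide)

lemma expectation_X: "1 \<le> h \<Longrightarrow> expectation (X h) = 0"
  using E_moment[of h 1] unfolding X_def by (simp add: prob_space)

lemma indep_X: "indep_vars (\<lambda>_. borel) X {1..}"
  using indep_vars_compose2[OF indep_E, of "\<lambda>h y. (y - 1) / real h" "\<lambda>_. borel"]
  unfolding X_def by simp

lemma X_mult_X:
  assumes "1 \<le> h" "1 \<le> i"
  shows "integrable M (\<lambda>\<omega>. X h \<omega> * X i \<omega>)"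
    and "expectation (\<lambda>\<omega>. X h \<omega> * X i \<omega>) = (if h = i then 1 / (real h)^2 else 0)"
proof -
  have "integrable M (\<lambda>\<omega>. X h \<omega> * X i \<omega>) \<and>
      expectation (\<lambda>\<omega>. X h \<omega> * X i \<omega>) = (if h = i then 1 / (real h)^2 else 0)"
  proof (cases "h = i")
    case True
    have square: "X h \<omega> * X i \<omega> = (E h \<omega> ^ 2 - 2 * E h \<omega> ^ 1 + 1) / (real h)^2" for \<omega>
      using True by (auto simp: X_def field_simps power2_eq_square)
    show ?thesis
      unfolding square using True E_moment[OF \<open>1 \<le> h\<close>, of 1] E_moment[OF \<open>1 \<le> h\<close>, of 2]
      by (simp add: prob_space)
  next
    case False
    have indep: "indep_vars (\<lambda>_. borel) X {h, i}"
      by (rule indep_vars_subset[OF indep_X]) (use assms in auto)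
    have "integrable M (\<lambda>\<omega>. \<Prod>j\<in>{h, i}. X j \<omega>)"
      "expectation (\<lambda>\<omega>. \<Prod>j\<in>{h, i}. X j \<omega>) = (\<Prod>j\<in>{h, i}. expectation (X j))"
      using indep_vars_integrable[OF _ indep] indep_vars_lebesgue_integral[OF _ indep] X_integrable assms
      by auto
    then show ?thesis using False expectation_X[OF \<open>1 \<le> h\<close>] by simp
  qed
  then show "integrable M (\<lambda>\<omega>. X h \<omega> * X i \<omega>)"
    "expectation (\<lambda>\<omega>. X h \<omega> * X i \<omega>) = (if h = i then 1 / (real h)^2 else 0)"
    by auto
qed

lemma second_moment_sum_X:
  assumes "1 \<le> a"
  shows "integrable M (\<lambda>\<omega>. (\<Sum>h\<in>{a..<a + n}. X h \<omega>)^2)"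
    and "expectation (\<lambda>\<omega>. (\<Sum>h\<in>{a..<a + n}. X h \<omega>)^2) = (\<Sum>h\<in>{a..<a + n}. 1 / (real h)^2)"
proof -
  let ?I = "{a..<a + n}"
  have square: "(\<Sum>h\<in>?I. X h \<omega>)^2 = (\<Sum>i\<in>?I. \<Sum>j\<in>?I. X i \<omega> * X j \<omega>)" for \<omega>
    by (simp add: power2_eq_square sum_product)
  show "integrable M (\<lambda>\<omega>. (\<Sum>h\<in>?I. X h \<omega>)^2)"
    unfolding square using assms by (intro Bochner_Integration.integrable_sum X_mult_X) auto
  have "expectation (\<lambda>\<omega>. (\<Sum>h\<in>?I. X h \<omega>)^2) = (\<Sum>i\<in>?I. expectation (\<lambda>\<omega>. \<Sum>j\<in>?I. X i \<omega> * X j \<omega>))"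
    unfolding square using assms
    by (intro Bochner_Integration.integral_sum Bochner_Integration.integrable_sum X_mult_X) auto
  also have "\<dots> = (\<Sum>i\<in>?I. \<Sum>j\<in>?I. expectation (\<lambda>\<omega>. X i \<omega> * X j \<omega>))"
    using assms by (intro sum.cong refl Bochner_Integration.integral_sum X_mult_X) auto
  also have "\<dots> = (\<Sum>i\<in>?I. \<Sum>j\<in>?I. if i = j then 1 / (real i)^2 else 0)"
    using assms by (intro sum.cong refl) (simp add: X_mult_X)
  also have "\<dots> = (\<Sum>h\<in>?I. 1 / (real h)^2)"
    by simp
  finally show "expectation (\<lambda>\<omega>. (\<Sum>h\<in>?I. X h \<omega>)^2) = (\<Sum>h\<in>?I. 1 / (real h)^2)" .
qed

lemma dyadic_square_sum_X_measurable:
  "1 \<le> a \<Longrightarrow> (\<lambda>\<omega>. dyadic_square_sum (\<lambda>h. X h \<omega>) k a) \<in> borel_measurable M"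
proof (induction k arbitrary: a)
  case (Suc k)
  then show ?case
    using Suc.IH[of a] Suc.IH[of "a + 2^k"] by (simp add: borel_measurable_sum)
qed simp

lemma dyadic_square_sum_X_expectation:
  assumes "1 \<le> a"
  shows "integrable M (\<lambda>\<omega>. dyadic_square_sum (\<lambda>h. X h \<omega>) k a) \<and>
    expectation (\<lambda>\<omega>. dyadic_square_sum (\<lambda>h. X h \<omega>) k a)
      \<le> real (k + 1) * (\<Sum>h\<in>{a..<a + 2^k}. 1 / (real h)^2)"
  using assms
proof (induction k arbitrary: a)
  case 0
  then show ?case using X_mult_X[OF \<open>1 \<le> a\<close> \<open>1 \<le> a\<close>] by (simp add: power2_eq_square)
next
  case (Suc k)
  let ?R = "\<lambda>b \<omega>. dyadic_square_sum (\<lambda>h. X h \<omega>) k b"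
  let ?V = "\<lambda>b. \<Sum>h\<in>{b..<b + 2^k}. 1 / (real h)^2"
  have "1 \<le> a + 2^k" using Suc.prems by simp
  note left = Suc.IH[OF Suc.prems] and right = Suc.IH[OF this]
    and block = second_moment_sum_X[OF Suc.prems, of "2^k"]
  have V_split: "(\<Sum>h\<in>{a..<a + 2^Suc k}. 1 / (real h)^2) = ?V a + ?V (a + 2^k)"
    by (subst sum.atLeastLessThan_concat[symmetric, of a "a + 2^k"]) (auto simp: add.assoc mult_2)
  have "?V (a + 2^k) \<ge> 0" by (intro sum_nonneg) auto
  have "integrable M (\<lambda>\<omega>. dyadic_square_sum (\<lambda>h. X h \<omega>) (Suc k) a)"
    using left right block by simp
  moreover have "expectation (\<lambda>\<omega>. dyadic_square_sum (\<lambda>h. X h \<omega>) (Suc k) a)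
      = expectation (?R a) + expectation (?R (a + 2^k)) + ?V a"
    using left right block by simp
  moreover have "\<dots> \<le> real (Suc k + 1) * (\<Sum>h\<in>{a..<a + 2^Suc k}. 1 / (real h)^2)"
    unfolding V_split using left right \<open>?V (a + 2^k) \<ge> 0\<close> by (simp add: algebra_simps)
  ultimately show ?case by simp
qed

lemma AE_eventually_dyadic_square_sum_X_small:
  assumes "0 < \<sigma>" "\<sigma> < 1/2"
  shows "AE \<omega> in M. \<forall>\<^sub>F k in sequentially.
    real (k + 1) * dyadic_square_sum (\<lambda>h. X h \<omega>) k (2^k) < ((2 powr (-\<sigma>))^k)^2"
proof -
  define q where "q = 2 powr (-\<sigma>)"
  define r where "r = 2 powr (2 * \<sigma> - 1)"
  have "0 < q" "0 < r" "r < 1" using assms by (auto simp: q_def r_def powr_less_one)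
  have "q^2 = 2 powr (- (2 * \<sigma>))"
    unfolding q_def power2_eq_square by (simp add: powr_add[symmetric])
  then have "2 * q^2 = 2 powr (1 - 2 * \<sigma>)"
    using powr_add[of 2 1 "- (2 * \<sigma>)"] by simp
  then have r_eq: "r = 1 / (2 * q^2)"
    by (simp add: r_def powr_minus_divide[symmetric])
  have r_power: "r^k = 1 / (2^k * (q^k)^2)" for k
    unfolding r_eq by (simp add: power_divide power_mult_distrib mult.commute flip: power_mult)
  define A where "A k = {\<omega>\<in>space M. (q^k)^2 \<le> real (k + 1) * dyadic_square_sum (\<lambda>h. X h \<omega>) k (2^k)}" for k
  have A_sets: "A k \<in> sets M" for k
    using dyadic_square_sum_X_measurable[of "2^k" k] unfolding A_def by measurable
  have measure_A: "measure M (A k) \<le> 2 * (real k + 1)^2 * r^k" for k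
  proof -
    have "(1::nat) \<le> 2^k" by simp
    note R = dyadic_square_sum_X_expectation[OF this, of k]
    have "measure M (A k) \<le> expectation (\<lambda>\<omega>. real (k + 1) * dyadic_square_sum (\<lambda>h. X h \<omega>) k (2^k)) / (q^k)^2"
      unfolding A_def using R \<open>0 < q\<close>
      by (intro integral_Markov_inequality_measure[where A = "space M"]) (auto simp: dyadic_square_sum_nonneg)
    also have "\<dots> = real (k + 1) * expectation (\<lambda>\<omega>. dyadic_square_sum (\<lambda>h. X h \<omega>) k (2^k)) / (q^k)^2"
      by simp
    also have "\<dots> \<le> real (k + 1) * (real (k + 1) * (2 / 2^k)) / (q^k)^2"
    proof -
      have "expectation (\<lambda>\<omega>. dyadic_square_sum (\<lambda>h. X h \<omega>) k (2^k))
          \<le> real (k + 1) * (\<Sum>h\<in>{2^k..<2^k + 2^k}. 1 / (real h)^2)"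
        using R by blast
      also have "\<dots> \<le> real (k + 1) * (2 / 2^k)"
        using sum_inverse_square_le[of "2^k" "2^k"] by (intro mult_left_mono) auto
      finally show ?thesis by (intro divide_right_mono mult_left_mono) auto
    qed
    also have "\<dots> = 2 * (real k + 1)^2 * r^k"
    proof -
      have "real (k + 1) * (real (k + 1) * (2 / 2^k)) = 2 * (real k + 1)^2 / 2^k"
        by (simp add: power2_eq_square algebra_simps)
      then show ?thesis unfolding r_power by simp
    qed
    finally show ?thesis .
  qed
  have "(\<lambda>k. 2 * (real k + 1)^2 * r^k) \<in> O(\<lambda>k. 1 / real k ^ 2)"
    using \<open>0 < r\<close> \<open>r < 1\<close> by real_asymp
  then have "summable (\<lambda>k. 2 * (real k + 1)^2 * r^k)"
    by (rule summable_comparison_test_bigo[rotated])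
      (use inverse_power_summable[of 2, where 'a = real] in \<open>simp add: inverse_eq_divide\<close>)
  then have "summable (\<lambda>k. measure M (A k))"
    by (rule summable_comparison_test') (use measure_A in simp)
  then have "AE \<omega> in M. \<forall>\<^sub>F k in sequentially. \<omega> \<in> space M - A k"
    using A_sets by (intro borel_cantelli_AE1) (auto simp: emeasure_eq_measure)
  then show ?thesis
    by (rule AE_mp) (auto simp: A_def q_def not_le elim!: eventually_mono intro!: AE_I2)
qed

lemma AE_tail_sum_X_le_powr:
  assumes "0 < \<sigma>" "\<sigma> < 1/2"
  shows "AE \<omega> in M. \<exists>C. \<forall>n m. 1 \<le> n \<longrightarrow> n \<le> m \<longrightarrow> \<bar>\<Sum>h\<in>{n..<m}. X h \<omega>\<bar> \<le> C * real n powr (-\<sigma>)"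
  using AE_eventually_dyadic_square_sum_X_small[OF assms]
proof (rule AE_mp, intro AE_I2 impI)
  fix \<omega>
  assume "\<forall>\<^sub>F k in sequentially.
    real (k + 1) * dyadic_square_sum (\<lambda>h. X h \<omega>) k (2^k) < ((2 powr (-\<sigma>))^k)^2"
  then obtain K where K: "\<And>k. K \<le> k \<Longrightarrow>
      real (k + 1) * dyadic_square_sum (\<lambda>h. X h \<omega>) k (2^k) < ((2 powr (-\<sigma>))^k)^2"
    unfolding eventually_sequentially by blast
  have "\<bar>\<Sum>h\<in>{2^k..<2^k + m}. X h \<omega>\<bar> \<le> (2 powr (-\<sigma>))^k" if "K \<le> k" "m \<le> 2^k" for k m
  proof -
    have "\<bar>\<Sum>h\<in>{2^k..<2^k + m}. X h \<omega>\<bar>^2 \<le> real (k + 1) * dyadic_square_sum (\<lambda>h. X h \<omega>) k (2^k)"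
      using initial_sum_square_le_dyadic_square_sum[OF \<open>m \<le> 2^k\<close>] by simp
    also have "\<dots> < ((2 powr (-\<sigma>))^k)^2"
      using K[OF \<open>K \<le> k\<close>] .
    finally show ?thesis
      by (rule less_imp_le[OF power_less_imp_less_base]) auto
  qed
  then have "\<bar>\<Sum>h\<in>{n..<m}. X h \<omega>\<bar> \<le> 2 / ((1 - 2 powr (-\<sigma>)) * 2 powr (-\<sigma>)) * real n powr (-\<sigma>)"
    if "2^K \<le> n" "n \<le> m" for n m
    using tail_sum_le_powr_of_dyadic_bounds[OF \<open>0 < \<sigma>\<close> _ that] by blast
  then show "\<exists>C. \<forall>n m. 1 \<le> n \<longrightarrow> n \<le> m \<longrightarrow> \<bar>\<Sum>h\<in>{n..<m}. X h \<omega>\<bar> \<le> C * real n powr (-\<sigma>)"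
    using \<open>0 < \<sigma>\<close>
    by (intro ex_tail_sum_powr_bound[where N = "2^K" and C = "2 / ((1 - 2 powr (-\<sigma>)) * 2 powr (-\<sigma>))"])
      auto
qed

text \<open>The random part of the exponent: \<open>exp (- \<gamma> * S_jk E j k)\<close> is its mean
  \<open>exp (- (\<Sum>h=j..k. ln (1 + \<gamma> / h)))\<close> times \<open>exp (fluct \<gamma> j k)\<close>.\<close>
definition fluct :: "real \<Rightarrow> nat \<Rightarrow> nat \<Rightarrow> 'a \<Rightarrow> real" where
  "fluct \<gamma> j k \<omega> = - \<gamma> * (\<Sum>h=j..k. X h \<omega>) + (\<Sum>h=j..k. ln (1 + \<gamma> / real h) - \<gamma> / real h)"

lemma W_k_eq_fluct:
  assumes "0 \<le> \<gamma>"
  shows "W_k M E \<gamma> \<tau> k \<omega> = (\<Sum>j=1..k. (f_tau \<tau> j - f_tau \<tau> (j - 1)) *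
      exp (- (\<Sum>h=j..k. ln (1 + \<gamma> / real h))) * (exp (fluct \<gamma> j k \<omega>) - 1))"
  unfolding W_k_def
proof (intro sum.cong refl)
  fix j assume "j \<in> {1..k}"
  have "- \<gamma> * S_jk E j k \<omega> = - (\<Sum>h=j..k. ln (1 + \<gamma> / real h)) + fluct \<gamma> j k \<omega>"
    unfolding S_jk_def fluct_def X_def
    by (simp add: sum_distrib_left sum_negf sum.distrib sum_subtractf diff_divide_distrib algebra_simps)
  then have "exp (- \<gamma> * S_jk E j k \<omega>) = exp (- (\<Sum>h=j..k. ln (1 + \<gamma> / real h))) * exp (fluct \<gamma> j k \<omega>)"
    by (simp only: exp_add)
  moreover have "integral\<^sup>L M (\<lambda>\<eta>. exp (- \<gamma> * S_jk E j k \<eta>)) = exp (- (\<Sum>h=j..k. ln (1 + \<gamma> / real h)))"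
    using expectation_exp_S_jk[OF assms, of j k] \<open>j \<in> {1..k}\<close> by simp
  ultimately show "(f_tau \<tau> j - f_tau \<tau> (j - 1)) *
      (exp (- \<gamma> * S_jk E j k \<omega>) - integral\<^sup>L M (\<lambda>\<eta>. exp (- \<gamma> * S_jk E j k \<eta>))) =
    (f_tau \<tau> j - f_tau \<tau> (j - 1)) * exp (- (\<Sum>h=j..k. ln (1 + \<gamma> / real h))) * (exp (fluct \<gamma> j k \<omega>) - 1)"
    by (simp only:) (simp add: algebra_simps)
qed

lemma abs_fluct_le:
  assumes "0 \<le> \<gamma>" "\<sigma> \<le> 1" "1 \<le> j" "j \<le> k"
    and tail: "\<And>n m. 1 \<le> n \<Longrightarrow> n \<le> m \<Longrightarrow> \<bar>\<Sum>h\<in>{n..<m}. X h \<omega>\<bar> \<le> C * real n powr (-\<sigma>)"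
  shows "\<bar>fluct \<gamma> j k \<omega>\<bar> \<le> (\<gamma> * C + 2 * \<gamma>^2) * real j powr (-\<sigma>)"
proof -
  have "\<bar>\<Sum>h=j..k. X h \<omega>\<bar> \<le> C * real j powr (-\<sigma>)"
    using tail[of j "Suc k"] assms by (simp add: atLeastLessThanSuc_atLeastAtMost)
  moreover have "\<bar>\<Sum>h=j..k. ln (1 + \<gamma> / real h) - \<gamma> / real h\<bar> \<le> \<gamma>^2 * (\<Sum>h\<in>{j..<j + (Suc k - j)}. 1 / (real h)^2)"
  proof -
    have "\<bar>\<Sum>h=j..k. ln (1 + \<gamma> / real h) - \<gamma> / real h\<bar> \<le> (\<Sum>h=j..k. (\<gamma> / real h)^2)"
      by (rule order_trans[OF sum_abs sum_mono]) (use \<open>0 \<le> \<gamma>\<close> in \<open>simp add: abs_ln_one_plus_x_minus_x_le_square\<close>)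
    then show ?thesis
      using assms by (simp add: sum_distrib_left power_divide atLeastLessThanSuc_atLeastAtMost)
  qed
  moreover have "1 / real j \<le> real j powr (-\<sigma>)"
    using assms powr_mono[of "-1" "-\<sigma>" "real j"] by (simp add: powr_minus_divide)
  then have "\<gamma>^2 * (2 / real j) \<le> 2 * \<gamma>^2 * real j powr (-\<sigma>)"
    using mult_left_mono[of "1 / real j" "real j powr (-\<sigma>)" "2 * \<gamma>^2"] by (simp add: mult.commute)
  then have "\<gamma>^2 * (\<Sum>h\<in>{j..<j + (Suc k - j)}. 1 / (real h)^2) \<le> 2 * \<gamma>^2 * real j powr (-\<sigma>)"
    by (rule order_trans[rotated])
      (intro mult_left_mono sum_inverse_square_le, use \<open>1 \<le> j\<close> in auto)
  moreover have "\<bar>fluct \<gamma> j k \<omega>\<bar> \<le> \<gamma> * \<bar>\<Sum>h=j..k. X h \<omega>\<bar> + \<bar>\<Sum>h=j..k. ln (1 + \<gamma> / real h) - \<gamma> / real h\<bar>"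
    unfolding fluct_def using \<open>0 \<le> \<gamma>\<close> abs_triangle_ineq[of "- \<gamma> * (\<Sum>h=j..k. X h \<omega>)"]
    by (simp add: abs_mult)
  moreover have "\<gamma> * \<bar>\<Sum>h=j..k. X h \<omega>\<bar> \<le> \<gamma> * (C * real j powr (-\<sigma>))"
    using calculation(1) \<open>0 \<le> \<gamma>\<close> by (rule mult_left_mono)
  moreover have "(\<gamma> * C + 2 * \<gamma>^2) * real j powr (-\<sigma>) =
      \<gamma> * (C * real j powr (-\<sigma>)) + 2 * \<gamma>^2 * real j powr (-\<sigma>)"
    by (simp add: algebra_simps)
  ultimately show ?thesis
    by linarith
qed

theorem AE_W_k_tendsto_zero:
  assumes "0 < \<gamma>" "0 < \<tau>" "\<tau> < 1/2"
  shows "AE \<omega> in M. (\<lambda>k. W_k M E \<gamma> \<tau> k \<omega>) \<longlonglongrightarrow> 0"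
proof -
  define \<sigma> where "\<sigma> = (2 * \<tau> + 1) / 4"
  have \<sigma>: "0 < \<sigma>" "\<tau> < \<sigma>" "\<sigma> < 1/2" using assms by (auto simp: \<sigma>_def)
  show ?thesis
    using AE_tail_sum_X_le_powr[OF \<sigma>(1,3)]
  proof (rule AE_mp, intro AE_I2 impI, elim exE)
    fix \<omega> C
    assume tail: "\<forall>n m. 1 \<le> n \<longrightarrow> n \<le> m \<longrightarrow> \<bar>\<Sum>h\<in>{n..<m}. X h \<omega>\<bar> \<le> C * real n powr (-\<sigma>)"
    define c where "c = \<gamma> * C + 2 * \<gamma>^2"
    have "0 \<le> C" using tail[rule_format, of 1 1] by simp
    then have "0 \<le> c" using assms by (simp add: c_def)
    have summable: "summable (\<lambda>j. (f_tau \<tau> j - f_tau \<tau> (j - 1)) * (c * real j powr (-\<sigma>)))"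
      using summable_f_tau_increment_mult_powr[of \<tau> \<sigma> c] assms \<sigma> \<open>0 \<le> c\<close> by simp
    have "(\<lambda>k. \<Sum>j=1..k. (f_tau \<tau> j - f_tau \<tau> (j - 1)) *
        exp (- (\<Sum>h=j..k. ln (1 + \<gamma> / real h))) * (exp (fluct \<gamma> j k \<omega>) - 1)) \<longlonglongrightarrow> 0"
    proof (rule weighted_exp_sum_tendsto_zero[where b = "\<lambda>j. c * real j powr (-\<sigma>)" and B = c])
      show "(\<lambda>k. exp (- (\<Sum>h=j..k. ln (1 + \<gamma> / real h)))) \<longlonglongrightarrow> 0" if "1 \<le> j" for j
        using sum_ln_one_plus_inverse_at_top[OF assms(1) that]
        by (intro filterlim_compose[OF exp_at_bot] filterlim_compose[OF filterlim_uminus_at_bot_at_top])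
      show "\<bar>fluct \<gamma> j k \<omega>\<bar> \<le> c * real j powr (-\<sigma>)" if "1 \<le> j" "j \<le> k" for j k
        unfolding c_def using tail that assms \<sigma> by (intro abs_fluct_le) auto
      show "c * real j powr (-\<sigma>) \<le> c" for j
        using mult_left_mono[OF of_nat_powr_neg_le_one \<open>0 \<le> c\<close>] \<sigma> by simp
    qed (use assms \<open>0 \<le> c\<close> summable f_tau_increment_nonneg[OF assms(2)] in \<open>auto intro: sum_nonneg\<close>)
    then show "(\<lambda>k. W_k M E \<gamma> \<tau> k \<omega>) \<longlonglongrightarrow> 0"
      using assms by (simp add: W_k_eq_fluct)
  qed
qed

end

theorem corollary1:
  fixes M :: "'a measure" and E :: "nat \<Rightarrow> 'a \<Rightarrow> real" and \<gamma> \<tau> :: real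
  assumes "prob_space M"
    and "\<gamma> > 0"
    and "0 < \<tau>" and "\<tau> < 1/2"
    and "\<And>h. h \<ge> 1 \<Longrightarrow> distributed M lborel (E h) (\<lambda>x. ennreal (exponential_density 1 x))"
    and "prob_space.indep_vars M (\<lambda>_. borel) E {1..}"
  shows "\<exists>Winf \<in> borel_measurable M.
           AE \<omega> in M. (\<lambda>k. W_k M E \<gamma> \<tau> k \<omega>) \<longlonglongrightarrow> Winf \<omega>"
proof -
  interpret iid_unit_exponential M E
    using assms(1,5,6) by (intro iid_unit_exponential.intro iid_unit_exponential_axioms.intro)
  show ?thesis
    using AE_W_k_tendsto_zero[OF assms(2-4)] by (intro bexI[of _ "\<lambda>_. 0"]) auto
qed

end
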